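(* Let $\mathcal B$ be a bilinear form on $\mathbb C[z]$, let $s^*,s^\dagger\in\mathbb C$, and define bilinear forms $\mathcal B^*,\mathcal B^\dagger$ on $\mathbb C[z]$ by $\mathcal B^*[z^i,z^j]:=\mathcal B[(z-s^* )z^i,z^j]$ and $\mathcal B^\dagger[z^i,z^j]:=\mathcal B[z^i,(z-s^\dagger)z^j]$ for all $i,j\ge0$. Let $\tau_0:=1$, $\tau_n:=\det(\mathcal B[z^i,z^j])_{i,j=0}^{n-1}$ ($n\ge1$), assumed nonzero. Suppose that $\{\phi_n\},\{\psi_n\}$; $\{\phi^*_n\},\{\psi^*_n\}$; and $\{\phi^\dagger_n\},\{\psi^\dagger_n\}$ (indexed by $n\ge0$) are the pairs of monic biorthogonal polynomial sequences with respect to $\mathcal B$, $\mathcal B^*$ and $\mathcal B^\dagger$ respectively, and that $\phi_n(s^* )\neq0$ and $\psi_n(s^\dagger)\neq0$ for all $n\ge0$. Then for all $n\ge0$: \begin{align*} (z-s^* )\phi^*_n(z)&=\phi_{n+1}(z)+q^*_n\phi_n(z), & q^*_n&=-\frac{\phi_{n+1}(s^* )}{\phi_n(s^* )},\\ \phi_{n+1}(z)&=\phi^\dagger_{n+1}(z)+e^\dagger_n\phi^\dagger_n(z), & e^\dagger_n&=\frac{\tau_n\tau_{n+2}}{q^\dagger_n\tau_{n+1}^2},\\ (z-s^\dagger)\psi^\dagger_n(z)&=\psi_{n+1}(z)+q^\dagger_n\psi_n(z), & q^\dagger_n&=-\frac{\psi_{n+1}(s^\dagger)}{\psi_n(s^\dagger)},\\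 \psi_{n+1}(z)&=\psi^*_{n+1}(z)+e^*_n\psi^*_n(z), & e^*_n&=\frac{\tau_n\tau_{n+2}}{q^*_n\tau_{n+1}^2}. \end{align*}
   Context: For a bilinear form $\mathcal C$ on $\mathbb C[z]$, a pair of monic biorthogonal polynomial sequences $\{\phi_n\}_{n\ge0},\{\psi_n\}_{n\ge0}$ with respect to $\mathcal C$ means: $\deg\phi_n=\deg\psi_n=n$, $\phi_n$ and $\psi_n$ are monic, and $\mathcal C[\phi_m,\psi_n]=h_n\delta_{m,n}$ with $h_n\neq0$ for all $m,n\ge0$ ($\delta$ the Kronecker delta). *)

theory Defs
  imports "HOL-Computational_Algebra.Polynomial" "Jordan_Normal_Form.Determinant"
begin

definition bilinear_form :: "(complex poly \<Rightarrow> complex poly \<Rightarrow> complex) \<Rightarrow> bool" where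
  "bilinear_form B \<longleftrightarrow>
     (\<forall>p p' q. B (p + p') q = B p q + B p' q) \<and>
     (\<forall>c p q. B (smult c p) q = c * B p q) \<and>
     (\<forall>p q q'. B p (q + q') = B p q + B p q') \<and>
     (\<forall>c p q. B p (smult c q) = c * B p q)"

definition monic_biorth :: "(complex poly \<Rightarrow> complex poly \<Rightarrow> complex)
    \<Rightarrow> (nat \<Rightarrow> complex poly) \<Rightarrow> (nat \<Rightarrow> complex poly) \<Rightarrow> bool" where
  "monic_biorth B \<phi> \<psi> \<longleftrightarrow>
     (\<forall>n. degree (\<phi> n) = n \<and> degree (\<psi> n) = n \<and>
          lead_coeff (\<phi> n) = 1 \<and> lead_coeff (\<psi> n) = 1) \<and>
     (\<forall>n. \<exists>h. h \<noteq> 0 \<and> (\<forall>m. B (\<phi> m) (\<psi> n) = (if m = n then h else 0)))"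

definition tau :: "(complex poly \<Rightarrow> complex poly \<Rightarrow> complex) \<Rightarrow> nat \<Rightarrow> complex" where
  "tau B n = (if n = 0 then 1
     else det (mat n n (\<lambda>(i, j). B (monom 1 i) (monom 1 j))))"

end

theory Submission
  imports Defs
begin

text \<open>
  Multiplying by \<open>z - s\<close> costs only one degree of orthogonality: \<open>(z - s) \<psi>\<^sup>\<dagger>\<^sub>n\<close> and \<open>\<phi>\<^sub>n\<^sub>+\<^sub>1\<close>
  are monic of degree \<open>n + 1\<close> and annihilate every monomial of degree \<open>< n\<close> under \<open>\<B>\<close> and
  \<open>\<B>\<^sup>\<dagger>\<close> respectively, so each is a combination of two consecutive biorthogonal polynomials.
  The coefficient of the first expansion is found by evaluating at \<open>s\<close>; that of the second
  by pairing with \<open>\<psi>\<^sup>\<dagger>\<^sub>n\<close>, which gives \<open>h\<^sub>n\<^sub>+\<^sub>1 / (q\<^sup>\<dagger>\<^sub>n h\<^sub>n)\<close> for the norms \<open>h\<^sub>n = \<B>[\<phi>\<^sub>n, \<psi>\<^sub>n]\<close>,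
  and \<open>h\<^sub>n = \<tau>\<^sub>n\<^sub>+\<^sub>1 / \<tau>\<^sub>n\<close> because the Gram matrix of the monomials is equivalent to
  \<open>diag(h\<^sub>0, h\<^sub>1, \<dots>)\<close> by unitriangular matrices. Swapping the arguments of the forms turns the
  relations for \<open>\<B>\<^sup>*\<close> into those for \<open>\<B>\<^sup>\<dagger>\<close>.
\<close>


lemma bilinear_formD:
  assumes "bilinear_form B"
  shows bilinear_form_add_left: "B (p + p') q = B p q + B p' q"
    and bilinear_form_smult_left: "B (smult c p) q = c * B p q"
    and bilinear_form_add_right: "B p (q + q') = B p q + B p q'"
    and bilinear_form_smult_right: "B p (smult c q) = c * B p q"
  using assms unfolding bilinear_form_def by blast+

lemma bilinear_form_swap: "bilinear_form B \<Longrightarrow> bilinear_form (\<lambda>p q. B q p)"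
  unfolding bilinear_form_def by simp

lemma bilinear_form_mult_left: "bilinear_form B \<Longrightarrow> bilinear_form (\<lambda>p q. B (r * p) q)"
  unfolding bilinear_form_def by (simp add: distrib_left)

lemma bilinear_form_mult_right: "bilinear_form B \<Longrightarrow> bilinear_form (\<lambda>p q. B p (r * q))"
  unfolding bilinear_form_def by (simp add: distrib_left)

lemma bilinear_form_diff_left:
  assumes "bilinear_form B"
  shows "B (p - p') q = B p q - B p' q"
  using bilinear_form_add_left[OF assms, of "p - p'" p' q] by simp

lemma bilinear_form_sum_left:
  assumes "bilinear_form B" and "finite A"
  shows "B (\<Sum>a\<in>A. f a) q = (\<Sum>a\<in>A. B (f a) q)"
  using assms(2)
proof (induction A rule: finite_induct)
  case empty
  show ?case
    using bilinear_form_smult_left[OF assms(1), of 0 0 q] by simp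
next
  case (insert x F)
  then show ?case by (simp add: bilinear_form_add_left[OF assms(1)])
qed

lemma bilinear_form_expand_left:
  assumes "bilinear_form B" and "degree p < N"
  shows "B p q = (\<Sum>i<N. coeff p i * B (monom 1 i) q)"
proof -
  have "p = (\<Sum>i\<le>N - 1. monom (coeff p i) i)"
    by (rule poly_as_sum_of_monoms'[symmetric]) (use assms(2) in simp)
  also have "\<dots> = (\<Sum>i<N. smult (coeff p i) (monom 1 i))"
    using assms(2) by (simp add: smult_monom lessThan_Suc_atMost[symmetric])
  finally have "B p q = B (\<Sum>i<N. smult (coeff p i) (monom 1 i)) q"
    by (rule arg_cong[where f = "\<lambda>p. B p q"])
  then show ?thesis
    by (simp add: bilinear_form_sum_left[OF assms(1)] bilinear_form_smult_left[OF assms(1)])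
qed

lemma bilinear_form_expand_right:
  assumes "bilinear_form B" and "degree q < N"
  shows "B p q = (\<Sum>i<N. coeff q i * B p (monom 1 i))"
  using bilinear_form_expand_left[OF bilinear_form_swap[OF assms(1)] assms(2)] by simp

lemma bilinear_form_eqI:
  assumes "bilinear_form B1" "bilinear_form B2"
    and "\<And>i j. B1 (monom 1 i) (monom 1 j) = B2 (monom 1 i) (monom 1 j)"
  shows "B1 p q = B2 p q"
proof -
  have "B1 (monom 1 i) q = B2 (monom 1 i) q" for i
    by (simp add: bilinear_form_expand_right[OF assms(1), of q "Suc (degree q)"]
        bilinear_form_expand_right[OF assms(2), of q "Suc (degree q)"] assms(3))
  then show ?thesis
    by (simp add: bilinear_form_expand_left[OF assms(1), of p "Suc (degree p)"]
        bilinear_form_expand_left[OF assms(2), of p "Suc (degree p)"])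
qed

lemma degree_linear_factor_mult:
  fixes s :: "'a::idom"
  assumes "p \<noteq> 0"
  shows "degree ([:-s, 1:] * p) = Suc (degree p)"
    and "coeff ([:-s, 1:] * p) (Suc (degree p)) = lead_coeff p"
proof -
  show deg: "degree ([:-s, 1:] * p) = Suc (degree p)"
    using assms by (simp add: degree_mult_eq del: mult_pCons_left)
  show "coeff ([:-s, 1:] * p) (Suc (degree p)) = lead_coeff p"
    using lead_coeff_mult[of "[:-s, 1:]" p] by (simp only: deg) simp
qed

lemma monic_biorth_swap: "monic_biorth B \<phi> \<psi> \<Longrightarrow> monic_biorth (\<lambda>p q. B q p) \<psi> \<phi>"
  unfolding monic_biorth_def by (metis (full_types))

locale biorth =
  fixes B :: "complex poly \<Rightarrow> complex poly \<Rightarrow> complex" and \<phi> \<psi> :: "nat \<Rightarrow> complex poly"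
  assumes bil: "bilinear_form B" and mb: "monic_biorth B \<phi> \<psi>"
begin

definition h :: "nat \<Rightarrow> complex" where "h n = B (\<phi> n) (\<psi> n)"

lemma degree_phi: "degree (\<phi> n) = n" and degree_psi: "degree (\<psi> n) = n"
  and coeff_phi_top: "coeff (\<phi> n) n = 1" and coeff_psi_top: "coeff (\<psi> n) n = 1"
  using mb unfolding monic_biorth_def by metis+

lemma biorth_eq: "B (\<phi> m) (\<psi> n) = (if m = n then h n else 0)"
  using mb unfolding monic_biorth_def h_def by (metis (full_types))

lemma h_nonzero: "h n \<noteq> 0"
  using mb unfolding monic_biorth_def h_def by (metis (full_types))

lemma swap: "biorth (\<lambda>p q. B q p) \<psi> \<phi>"
  by unfold_locales (use bilinear_form_swap[OF bil] monic_biorth_swap[OF mb] in auto)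

lemma swap_h: "biorth.h (\<lambda>p q. B q p) \<psi> \<phi> = h"
  by (simp add: biorth.h_def[OF swap] h_def fun_eq_iff)

lemma monom_psi: "i \<le> n \<Longrightarrow> B (monom 1 i) (\<psi> n) = (if i = n then h n else 0)"
proof (induction i rule: less_induct)
  case (less i)
  have "B (\<phi> i) (\<psi> n) = (\<Sum>k<Suc i. coeff (\<phi> i) k * B (monom 1 k) (\<psi> n))"
    by (rule bilinear_form_expand_left[OF bil]) (simp add: degree_phi)
  also have "\<dots> = (\<Sum>k<i. coeff (\<phi> i) k * B (monom 1 k) (\<psi> n)) + B (monom 1 i) (\<psi> n)"
    by (simp add: coeff_phi_top)
  also have "(\<Sum>k<i. coeff (\<phi> i) k * B (monom 1 k) (\<psi> n)) = 0"
    by (rule sum.neutral) (use less in auto)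
  finally show ?case by (simp add: biorth_eq)
qed

lemma form_psi:
  assumes "degree p \<le> n"
  shows "B p (\<psi> n) = coeff p n * h n"
proof -
  have "B p (\<psi> n) = (\<Sum>i<Suc n. coeff p i * B (monom 1 i) (\<psi> n))"
    by (rule bilinear_form_expand_left[OF bil]) (use assms in simp)
  also have "\<dots> = (\<Sum>i<n. coeff p i * B (monom 1 i) (\<psi> n)) + coeff p n * h n"
    by (simp add: monom_psi)
  also have "(\<Sum>i<n. coeff p i * B (monom 1 i) (\<psi> n)) = 0"
    by (rule sum.neutral) (simp add: monom_psi)
  finally show ?thesis by simp
qed

lemma form_phi: "degree q \<le> n \<Longrightarrow> B (\<phi> n) q = coeff q n * h n"
  using biorth.form_psi[OF swap] by (simp add: swap_h)

lemma eq_0_if_orth_monoms: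
  assumes orth: "\<forall>j<n. B r (monom 1 j) = 0" and high: "\<forall>k\<ge>n. coeff r k = 0"
  shows "r = 0"
proof (rule ccontr)
  assume "r \<noteq> 0"
  define d where "d = degree r"
  have "coeff r d \<noteq> 0" using \<open>r \<noteq> 0\<close> by (simp add: d_def)
  with high have "d < n" by (meson not_le)
  have "B r (\<psi> d) = (\<Sum>j<Suc d. coeff (\<psi> d) j * B r (monom 1 j))"
    by (rule bilinear_form_expand_right[OF bil]) (simp add: degree_psi)
  also have "\<dots> = 0" by (rule sum.neutral) (use orth \<open>d < n\<close> in auto)
  finally show False
    using form_psi[of r d] \<open>coeff r d \<noteq> 0\<close> h_nonzero by (simp add: d_def)
qed

lemma two_term_expansion:
  assumes "degree P \<le> Suc n" and "coeff P (Suc n) = 1"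
    and orth: "\<forall>j<n. B P (monom 1 j) = 0"
  shows "\<exists>c. P = \<phi> (Suc n) + smult c (\<phi> n)"
proof -
  define c where "c = coeff P n - coeff (\<phi> (Suc n)) n"
  define R where "R = P - \<phi> (Suc n) - smult c (\<phi> n)"
  have "B (\<phi> m) (monom 1 j) = 0" if "j < m" for j m
    using form_phi[of "monom 1 j" m] that by (simp add: degree_monom_eq)
  then have "\<forall>j<n. B R (monom 1 j) = 0"
    using orth by (simp add: R_def bilinear_form_diff_left[OF bil] bilinear_form_smult_left[OF bil])
  moreover have "\<forall>k\<ge>n. coeff R k = 0"
  proof (intro allI impI)
    fix k assume "n \<le> k"
    then consider "k = n" | "k = Suc n" | "k > Suc n" by linarith
    then show "coeff R k = 0"
      by cases (use assms(1,2) in \<open>simp_all add: R_def c_def coeff_phi_top coeff_eq_0 degree_phi\<close>)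
  qed
  ultimately have "R = 0" by (rule eq_0_if_orth_monoms)
  then show ?thesis unfolding R_def by (metis diff_diff_eq eq_iff_diff_eq_0)
qed

lemma gram_matrix_diagonalised:
  fixes n :: nat
  defines "G \<equiv> mat n n (\<lambda>(i, j). B (monom 1 i) (monom 1 j))"
    and "L \<equiv> mat n n (\<lambda>(i, k). coeff (\<phi> i) k)"
    and "U \<equiv> mat n n (\<lambda>(k, j). coeff (\<psi> j) k)"
  shows "L * G * U = mat n n (\<lambda>(i, j). if i = j then h i else 0)"
proof (rule eq_matI)
  fix i j assume ij: "i < dim_row (mat n n (\<lambda>(i, j). if i = j then h i else 0))"
    "j < dim_col (mat n n (\<lambda>(i, j). if i = j then h i else 0))"
  then have "(L * G) $$ (i, l) = B (\<phi> i) (monom 1 l)" if "l < n" for l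
    using that bilinear_form_expand_left[OF bil, of "\<phi> i" n "monom 1 l"]
    by (simp add: L_def G_def scalar_prod_def degree_phi atLeast0LessThan)
  then have "(L * G * U) $$ (i, j) = (\<Sum>l<n. coeff (\<psi> j) l * B (\<phi> i) (monom 1 l))"
    using ij by (simp add: L_def G_def U_def scalar_prod_def atLeast0LessThan mult.commute)
  also have "\<dots> = B (\<phi> i) (\<psi> j)"
    using ij bilinear_form_expand_right[OF bil, of "\<psi> j" n] by (simp add: degree_psi)
  finally show "(L * G * U) $$ (i, j) = mat n n (\<lambda>(i, j). if i = j then h i else 0) $$ (i, j)"
    using ij by (simp add: biorth_eq)
qed (simp_all add: L_def G_def U_def)

lemma tau_eq_prod_h: "tau B n = (\<Prod>k<n. h k)"
proof (cases "n = 0")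
  case True then show ?thesis by (simp add: tau_def)
next
  case False
  define G where "G = mat n n (\<lambda>(i, j). B (monom 1 i) (monom 1 j))"
  define L where "L = mat n n (\<lambda>(i, k). coeff (\<phi> i) k)"
  define U where "U = mat n n (\<lambda>(k, j). coeff (\<psi> j) k)"
  have carrier: "G \<in> carrier_mat n n" "L \<in> carrier_mat n n" "U \<in> carrier_mat n n"
    unfolding G_def L_def U_def by auto
  have "det L = 1"
    by (subst det_lower_triangular[OF _ carrier(2)])
      (simp_all add: L_def coeff_eq_0 degree_phi prod_list_diag_prod coeff_phi_top)
  moreover have "det U = 1"
    by (subst det_upper_triangular[OF _ carrier(3)])
      (auto simp: upper_triangular_def U_def coeff_eq_0 degree_psi prod_list_diag_prod coeff_psi_top)
  moreover have "det (L * G * U) = (\<Prod>k<n. h k)"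
    unfolding G_def L_def U_def gram_matrix_diagonalised
    by (subst det_upper_triangular[of _ n])
      (auto simp: upper_triangular_def prod_list_diag_prod atLeast0LessThan)
  moreover have "det (L * G * U) = det L * det G * det U"
    using det_mult[OF mult_carrier_mat[OF carrier(2,1)] carrier(3)] det_mult[OF carrier(2,1)]
    by simp
  ultimately show ?thesis using False by (simp add: tau_def G_def)
qed

lemma h_ratio_eq_tau:
  "h (n+1) / (q * h n) = tau B n * tau B (n+2) / (q * (tau B (n+1))^2)"
  using h_nonzero[of n] h_nonzero[of "Suc n"]
  by (cases "q = 0") (simp_all add: tau_eq_prod_h field_simps power2_eq_square h_nonzero)

end

locale right_perturbation = biorth B \<phi> \<psi> + pert: biorth Bd \<phi>d \<psi>d
  for B Bd :: "complex poly \<Rightarrow> complex poly \<Rightarrow> complex" and \<phi> \<psi> \<phi>d \<psi>d :: "nat \<Rightarrow> complex poly"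
  and s :: complex +
  assumes Bd_eq: "Bd p q = B p ([:-s, 1:] * q)"
begin

lemma christoffel_relation:
  assumes nz: "poly (\<psi> n) s \<noteq> 0"
  shows "[:-s, 1:] * \<psi>d n = \<psi> (Suc n) + smult (- poly (\<psi> (Suc n)) s / poly (\<psi> n) s) (\<psi> n)"
proof -
  interpret swapped: biorth "\<lambda>p q. B q p" \<psi> \<phi> by (rule swap)
  have "\<psi>d n \<noteq> 0" using pert.degree_psi[of n] pert.coeff_psi_top[of n] by auto
  then have "degree ([:-s, 1:] * \<psi>d n) = Suc n" and "coeff ([:-s, 1:] * \<psi>d n) (Suc n) = 1"
    using degree_linear_factor_mult[of "\<psi>d n" s] pert.degree_psi[of n] pert.coeff_psi_top[of n]
    by simp_all
  moreover have "\<forall>j<n. B (monom 1 j) ([:-s, 1:] * \<psi>d n) = 0"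
  proof (intro allI impI)
    fix j assume "j < n"
    have "B (monom 1 j) ([:-s, 1:] * \<psi>d n) = Bd (monom 1 j) (\<psi>d n)" by (rule Bd_eq[symmetric])
    also have "\<dots> = coeff (monom 1 j) n * pert.h n"
      by (rule pert.form_psi) (use \<open>j < n\<close> in \<open>simp add: degree_monom_eq\<close>)
    finally show "B (monom 1 j) ([:-s, 1:] * \<psi>d n) = 0" using \<open>j < n\<close> by simp
  qed
  ultimately obtain c where c: "[:-s, 1:] * \<psi>d n = \<psi> (Suc n) + smult c (\<psi> n)"
    using swapped.two_term_expansion[of "[:-s, 1:] * \<psi>d n" n] by auto
  have "poly (\<psi> (Suc n)) s + c * poly (\<psi> n) s = poly ([:-s, 1:] * \<psi>d n) s"
    by (simp only: c poly_add poly_smult)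
  then have "poly (\<psi> (Suc n)) s + c * poly (\<psi> n) s = 0"
    by simp
  then have "c = - poly (\<psi> (Suc n)) s / poly (\<psi> n) s"
    using nz by (simp add: field_simps eq_neg_iff_add_eq_0 add.commute)
  with c show ?thesis by simp
qed

lemma geronimus_relation:
  assumes chr: "[:-s, 1:] * \<psi>d n = \<psi> (Suc n) + smult q (\<psi> n)"
  shows "\<phi> (Suc n) = \<phi>d (Suc n) + smult (h (Suc n) / (q * h n)) (\<phi>d n)"
proof -
  have "\<forall>j<n. Bd (\<phi> (Suc n)) (monom 1 j) = 0"
  proof (intro allI impI)
    fix j assume "j < n"
    have "degree ([:-s, 1:] * monom 1 j) \<le> Suc n"
      using degree_linear_factor_mult(1)[of "monom 1 j" s] \<open>j < n\<close> by (simp add: degree_monom_eq)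
    moreover have "coeff ([:-s, 1:] * monom 1 j) (Suc n) = 0"
      using degree_linear_factor_mult(1)[of "monom 1 j" s] \<open>j < n\<close>
      by (intro coeff_eq_0) (simp add: degree_monom_eq)
    ultimately show "Bd (\<phi> (Suc n)) (monom 1 j) = 0"
      unfolding Bd_eq by (simp only: form_phi mult_zero_left)
  qed
  then obtain c where c: "\<phi> (Suc n) = \<phi>d (Suc n) + smult c (\<phi>d n)"
    using pert.two_term_expansion[of "\<phi> (Suc n)" n] degree_phi coeff_phi_top by auto
  have "c * pert.h n = Bd (\<phi> (Suc n)) (\<psi>d n)"
    by (subst c) (simp add: bilinear_form_add_left[OF pert.bil]
        bilinear_form_smult_left[OF pert.bil] pert.biorth_eq)
  also have "\<dots> = h (Suc n)"
    unfolding Bd_eq chr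
    by (simp add: bilinear_form_add_right[OF bil] bilinear_form_smult_right[OF bil] biorth_eq)
  finally have "c * pert.h n = h (Suc n)" .
  moreover have "pert.h n = q * h n"
    unfolding pert.h_def Bd_eq chr
    using form_psi[of "\<phi>d n" n] form_psi[of "\<phi>d n" "Suc n"]
    by (simp add: bilinear_form_add_right[OF bil] bilinear_form_smult_right[OF bil]
        pert.degree_phi pert.coeff_phi_top coeff_eq_0)
  ultimately have "c = h (Suc n) / (q * h n)"
    using pert.h_nonzero[of n] by (simp add: field_simps)
  with c show ?thesis by simp
qed

end

theorem theorem2:
  fixes B Bs Bd :: "complex poly \<Rightarrow> complex poly \<Rightarrow> complex"
    and ss sd :: complex
    and \<phi> \<psi> \<phi>s \<psi>s \<phi>d \<psi>d :: "nat \<Rightarrow> complex poly"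
  assumes bil: "bilinear_form B" and bils: "bilinear_form Bs" and bild: "bilinear_form Bd"
    and Bs_def: "\<And>i j. Bs (monom 1 i) (monom 1 j) = B ([:-ss, 1:] * monom 1 i) (monom 1 j)"
    and Bd_def: "\<And>i j. Bd (monom 1 i) (monom 1 j) = B (monom 1 i) ([:-sd, 1:] * monom 1 j)"
    and tau_nz: "\<And>n. tau B n \<noteq> 0"
    and bo: "monic_biorth B \<phi> \<psi>"
    and bos: "monic_biorth Bs \<phi>s \<psi>s"
    and bod: "monic_biorth Bd \<phi>d \<psi>d"
    and nz_s: "\<And>n. poly (\<phi> n) ss \<noteq> 0"
    and nz_d: "\<And>n. poly (\<psi> n) sd \<noteq> 0"
  shows "\<forall>n.
    (let qs = - poly (\<phi> (n+1)) ss / poly (\<phi> n) ss;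
         qd = - poly (\<psi> (n+1)) sd / poly (\<psi> n) sd;
         ed = tau B n * tau B (n+2) / (qd * (tau B (n+1))^2);
         es = tau B n * tau B (n+2) / (qs * (tau B (n+1))^2)
     in [:-ss, 1:] * \<phi>s n = \<phi> (n+1) + smult qs (\<phi> n) \<and>
        \<phi> (n+1) = \<phi>d (n+1) + smult ed (\<phi>d n) \<and>
        [:-sd, 1:] * \<psi>d n = \<psi> (n+1) + smult qd (\<psi> n) \<and>
        \<psi> (n+1) = \<psi>s (n+1) + smult es (\<psi>s n))"
proof -
  interpret b: biorth B \<phi> \<psi> using bil bo by unfold_locales
  have Bd_eq: "Bd p q = B p ([:-sd, 1:] * q)" for p q
    by (rule bilinear_form_eqI[OF bild bilinear_form_mult_right[OF bil]]) (rule Bd_def)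
  have Bs_eq: "Bs p q = B ([:-ss, 1:] * p) q" for p q
    by (rule bilinear_form_eqI[OF bils bilinear_form_mult_left[OF bil]]) (rule Bs_def)
  interpret d: right_perturbation B Bd \<phi> \<psi> \<phi>d \<psi>d sd
    using b.biorth_axioms biorth.intro[OF bild bod]
    by (rule right_perturbation.intro) (simp add: right_perturbation_axioms_def Bd_eq)
  interpret s: right_perturbation "\<lambda>p q. B q p" "\<lambda>p q. Bs q p" \<psi> \<phi> \<psi>s \<phi>s ss
    using b.swap biorth.intro[OF bilinear_form_swap[OF bils] monic_biorth_swap[OF bos]]
    by (rule right_perturbation.intro) (simp add: right_perturbation_axioms_def Bs_eq)
  show ?thesis
    using d.christoffel_relation[OF nz_d] d.geronimus_relation[OF d.christoffel_relation[OF nz_d]]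
      s.christoffel_relation[OF nz_s] s.geronimus_relation[OF s.christoffel_relation[OF nz_s]]
    unfolding Let_def b.swap_h b.h_ratio_eq_tau Suc_eq_plus1 by blast
qed

end
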